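(* Let $D$ be a strong nonseparable digraph and let $(D_0,D_1,\ldots,D_k)$ be an ear decomposition of $D$. Let $i\in\{0,\ldots,k-1\}$ and let $P_i=(x_0,x_1,\ldots,x_{r-1},x_r)$ be the ear of $D_i$ in $D$ (so $D_{i+1}=D_i\cup P_i$), with $l(P_i)\geq 2$. If $D_i$ has a kernel $N$ but $D_{i+1}$ has no kernel, then one of the following holds: (1) $x_0,x_r\in N$ and $l(P_i)$ is odd; (2) $x_0\in N$, $x_r\notin N$ and $l(P_i)$ is even.
   Context: All digraphs are finite, without loops or multiple arcs. Paths and cycles are directed; the length $l(P)$ of a path $P$ is its number of arcs. A digraph is strong if for every ordered pair of vertices $x,y$ there is a directed path from $x$ to $y$; it is nonseparable if its underlying undirected graph is nonseparable (has no cut vertex). For a subdigraph $H$ of $D$, an ear of $H$ in $D$ is a directed path $(x_0,\ldots,x_r)$ in $D$ whose end vertices lie in $H$ and whose internal vertices do not lie in $H$. An ear decomposition of a nonseparable strong digraph $D$ is a sequence $(D_0,\ldots,D_k)$ of nonseparable strong subdigraphs of $D$ such that $D_0$ is a directed cycle, $D_{j+1}=D_j\cup P_j$ with $P_j$ an ear of $D_j$ in $D$ for each $j\in\{0,\ldots,k-1\}$, and $D_k=D$. A kernel of a digraph is a set $N$ of vertices that is independent (no arc between two of its vertices) and absorbent (every vertex not in $N$ has an out-neighbour in $N$). *)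

theory Defs
  imports Main
begin

text \<open>A digraph is given by a vertex set V and an arc set A of ordered pairs.
  Finite, loopless; multiple arcs are excluded by representing arcs as a set of pairs.\<close>

definition digraph :: "'a set \<Rightarrow> ('a \<times> 'a) set \<Rightarrow> bool" where
  "digraph V A \<longleftrightarrow> finite V \<and> A \<subseteq> V \<times> V \<and> (\<forall>x. (x, x) \<notin> A)"

definition subdigraph :: "'a set \<Rightarrow> ('a \<times> 'a) set \<Rightarrow> 'a set \<Rightarrow> ('a \<times> 'a) set \<Rightarrow> bool" where
  "subdigraph H B V A \<longleftrightarrow> H \<subseteq> V \<and> B \<subseteq> A \<and> B \<subseteq> H \<times> H"

definition dpath :: "('a \<times> 'a) set \<Rightarrow> 'a list \<Rightarrow> bool" where
  "dpath A xs \<longleftrightarrow> xs \<noteq> [] \<and> distinct xs \<and> (\<forall>j. Suc j < length xs \<longrightarrow> (xs ! j, xs ! Suc j) \<in> A)"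

definition path_len :: "'a list \<Rightarrow> nat" where
  "path_len xs = length xs - 1"

definition path_arcs :: "'a list \<Rightarrow> ('a \<times> 'a) set" where
  "path_arcs xs = {(xs ! j, xs ! Suc j) | j. Suc j < length xs}"

definition strong :: "'a set \<Rightarrow> ('a \<times> 'a) set \<Rightarrow> bool" where
  "strong V A \<longleftrightarrow> (\<forall>x\<in>V. \<forall>y\<in>V. \<exists>xs. dpath A xs \<and> hd xs = x \<and> last xs = y)"

definition ug_connected :: "'a set \<Rightarrow> ('a \<times> 'a) set \<Rightarrow> bool" where
  "ug_connected V A \<longleftrightarrow>
     (\<forall>x\<in>V. \<forall>y\<in>V. (x, y) \<in> ((A \<union> A\<inverse>) \<inter> (V \<times> V))\<^sup>*)"

definition nonseparable :: "'a set \<Rightarrow> ('a \<times> 'a) set \<Rightarrow> bool" where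
  "nonseparable V A \<longleftrightarrow> ug_connected V A \<and>
     (\<forall>v\<in>V. ug_connected (V - {v}) (A \<inter> ((V - {v}) \<times> (V - {v}))))"

definition dcycle :: "'a set \<Rightarrow> ('a \<times> 'a) set \<Rightarrow> bool" where
  "dcycle V A \<longleftrightarrow> (\<exists>xs. distinct xs \<and> length xs \<ge> 2 \<and> V = set xs \<and>
     A = {(xs ! j, xs ! ((Suc j) mod length xs)) | j. j < length xs})"

definition ear :: "'a set \<Rightarrow> ('a \<times> 'a) set \<Rightarrow> 'a list \<Rightarrow> bool" where
  "ear H A P \<longleftrightarrow> dpath A P \<and> hd P \<in> H \<and> last P \<in> H \<and>
     (\<forall>j. 0 < j \<and> j < length P - 1 \<longrightarrow> P ! j \<notin> H)"

text \<open>Ear decomposition (D_0,...,D_k) with D_j = (VV j, AA j) and ears P_j = PP j.\<close>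
definition ear_decomposition ::
  "'a set \<Rightarrow> ('a \<times> 'a) set \<Rightarrow> (nat \<Rightarrow> 'a set) \<Rightarrow> (nat \<Rightarrow> ('a \<times> 'a) set) \<Rightarrow> (nat \<Rightarrow> 'a list) \<Rightarrow> nat \<Rightarrow> bool" where
  "ear_decomposition V A VV AA PP k \<longleftrightarrow>
     (\<forall>j\<le>k. subdigraph (VV j) (AA j) V A \<and> nonseparable (VV j) (AA j) \<and> strong (VV j) (AA j)) \<and>
     dcycle (VV 0) (AA 0) \<and>
     (\<forall>j<k. ear (VV j) A (PP j) \<and>
            VV (Suc j) = VV j \<union> set (PP j) \<and> AA (Suc j) = AA j \<union> path_arcs (PP j)) \<and>
     VV k = V \<and> AA k = A"

definition kernel :: "'a set \<Rightarrow> ('a \<times> 'a) set \<Rightarrow> 'a set \<Rightarrow> bool" where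
  "kernel V A N \<longleftrightarrow> N \<subseteq> V \<and> (\<forall>x\<in>N. \<forall>y\<in>N. (x, y) \<notin> A) \<and>
     (\<forall>x\<in>V - N. \<exists>y\<in>N. (x, y) \<in> A)"

definition has_kernel :: "'a set \<Rightarrow> ('a \<times> 'a) set \<Rightarrow> bool" where
  "has_kernel V A \<longleftrightarrow> (\<exists>N. kernel V A N)"

end

theory Submission
  imports Defs
begin

text \<open>Suppose neither (1) nor (2) holds. Then the kernel N of D_i extends to a kernel of
  D_(i+1): label the internal vertices of the ear alternately, backwards from x_r, taking x_j
  into the kernel iff r - j is even exactly when x_r \<in> N. Then every arc x_j x_(j+1) with
  0 < j joins a taken and an untaken vertex, every untaken internal vertex is absorbed by its
  successor, and the only possible conflict is the arc x_0 x_1 with both ends taken, which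
  happens precisely in cases (1) and (2).\<close>

definition ear_kernel :: "'a set \<Rightarrow> 'a list \<Rightarrow> 'a set" where
  "ear_kernel N P =
     N \<union> {P ! j | j. 0 < j \<and> j < path_len P \<and> (even (path_len P - j) \<longleftrightarrow> last P \<in> N)}"

lemma ear_nthD:
  assumes "ear H A P"
  shows "distinct P" and "length P = Suc (path_len P)"
    and "P ! 0 = hd P" and "P ! path_len P = last P"
    and "\<And>j. 0 < j \<Longrightarrow> j < path_len P \<Longrightarrow> P ! j \<notin> H"
proof -
  have "P \<noteq> []" and "distinct P" using assms unfolding ear_def dpath_def by auto
  then show "distinct P" and len: "length P = Suc (path_len P)"
    and "P ! 0 = hd P" and "P ! path_len P = last P"
    by (auto simp: path_len_def hd_conv_nth last_conv_nth)
  show "P ! j \<notin> H" if "0 < j" "j < path_len P" for j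
    using assms that len unfolding ear_def by auto
qed

lemma distinct_nth_in_nth_image_iff:
  assumes "distinct xs" and "j < length xs" and "\<And>j'. Q j' \<Longrightarrow> j' < length xs"
  shows "xs ! j \<in> {xs ! j' | j'. Q j'} \<longleftrightarrow> Q j"
  using assms nth_eq_iff_index_eq by blast

lemma ear_kernel_Int:
  assumes "ear H A P" and "N \<subseteq> H"
  shows "ear_kernel N P \<inter> H = N"
  using assms ear_nthD(5)[OF assms(1)] unfolding ear_kernel_def by auto

lemma nth_in_ear_kernel_iff:
  assumes "ear H A P" and "N \<subseteq> H" and "0 < j" and "j \<le> path_len P"
  shows "P ! j \<in> ear_kernel N P \<longleftrightarrow> (even (path_len P - j) \<longleftrightarrow> last P \<in> N)"
proof -
  note P = ear_nthD[OF assms(1)]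
  let ?in = "\<lambda>j. even (path_len P - j) \<longleftrightarrow> last P \<in> N"
  have "P ! j \<in> {P ! j' | j'. 0 < j' \<and> j' < path_len P \<and> ?in j'}
      \<longleftrightarrow> 0 < j \<and> j < path_len P \<and> ?in j"
    by (rule distinct_nth_in_nth_image_iff) (use P(1,2) assms(4) in auto)
  then have K: "P ! j \<in> ear_kernel N P \<longleftrightarrow> P ! j \<in> N \<or> (j < path_len P \<and> ?in j)"
    unfolding ear_kernel_def Un_iff using assms(3) by (simp only: simp_thms)
  show ?thesis
  proof (cases "j = path_len P")
    case True
    then show ?thesis using K P(4) by simp
  next
    case False
    then have "j < path_len P" and "P ! j \<notin> N" using P(5) assms by auto
    then show ?thesis using K by blast
  qed
qed

lemma kernel_ear_kernel:
  assumes ker: "kernel H B N" and BH: "B \<subseteq> H \<times> H" and ear: "ear H A P"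
    and not_blocked: "\<not> (hd P \<in> N \<and> (last P \<in> N \<longleftrightarrow> odd (path_len P)))"
  shows "kernel (H \<union> set P) (B \<union> path_arcs P) (ear_kernel N P)"
proof -
  let ?r = "path_len P" and ?K = "ear_kernel N P"
  define taken where "taken j \<longleftrightarrow> (even (?r - j) \<longleftrightarrow> last P \<in> N)" for j
  note P = ear_nthD[OF ear]
  have NH: "N \<subseteq> H" using ker unfolding kernel_def by blast
  have ends: "P ! 0 \<in> H" "P ! ?r \<in> H" using ear P(3,4) unfolding ear_def by auto
  have KH: "?K \<inter> H = N" using ear_kernel_Int[OF ear NH] .
  have mem: "P ! j \<in> ?K \<longleftrightarrow> taken j" if "0 < j" "j \<le> ?r" for j
    using nth_in_ear_kernel_iff[OF ear NH that] unfolding taken_def .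
  have alternate: "taken j \<longleftrightarrow> \<not> taken (Suc j)" if "j < ?r" for j
    using that unfolding taken_def by auto
  have set_P: "set P = {P ! j | j. j \<le> ?r}"
    using P(2) by (auto simp: in_set_conv_nth less_Suc_eq_le)
  have arc_ear: "(x, y) \<in> path_arcs P \<longleftrightarrow> (\<exists>j < ?r. x = P ! j \<and> y = P ! Suc j)" for x y
    using P(2) unfolding path_arcs_def by auto
  have independent: "(x, y) \<notin> B \<union> path_arcs P" if x: "x \<in> ?K" and y: "y \<in> ?K" for x y
  proof
    assume "(x, y) \<in> B \<union> path_arcs P"
    then consider "(x, y) \<in> B" | j where "j < ?r" "x = P ! j" "y = P ! Suc j"
      using arc_ear by blast
    then show False
    proof cases
      case 1
      then have "x \<in> N" "y \<in> N" using BH KH x y by auto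
      then show False using ker 1 unfolding kernel_def by blast
    next
      case (2 j)
      then have "taken (Suc j)" using mem y by simp
      show False
      proof (cases "j = 0")
        case True
        then have "hd P \<in> N" using KH ends P(3) x 2 by auto
        moreover have "taken 1" using \<open>taken (Suc j)\<close> True by simp
        ultimately show False using not_blocked 2 True unfolding taken_def by (cases ?r) auto
      next
        case False
        then have "taken j" using mem 2 x by simp
        then show False using alternate 2 \<open>taken (Suc j)\<close> by blast
      qed
    qed
  qed
  have absorbed: "\<exists>y \<in> ?K. (x, y) \<in> B \<union> path_arcs P" if x: "x \<in> H \<union> set P - ?K" for x
  proof (cases "x \<in> H")
    case True
    then have "x \<in> H - N" using x unfolding ear_kernel_def by auto
    then show ?thesis using ker unfolding kernel_def ear_kernel_def by blast
  next
    case False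
    then obtain j where j: "x = P ! j" "0 < j" "j < ?r"
      using x set_P ends by (auto simp: le_less)
    then have "\<not> taken j" using mem x by simp
    then have "P ! Suc j \<in> ?K" using alternate mem j by simp
    moreover have "(x, P ! Suc j) \<in> path_arcs P" using arc_ear j by blast
    ultimately show ?thesis by blast
  qed
  have "?K \<subseteq> H \<union> set P"
    using NH P(2) unfolding ear_kernel_def by auto
  with independent absorbed show ?thesis
    unfolding kernel_def by (intro conjI ballI)
qed

theorem mainTheorem12:
  fixes V :: "'a set" and A :: "('a \<times> 'a) set"
    and VV :: "nat \<Rightarrow> 'a set" and AA :: "nat \<Rightarrow> ('a \<times> 'a) set" and PP :: "nat \<Rightarrow> 'a list"
    and k i :: nat and N :: "'a set"
  assumes "digraph V A" and "strong V A" and "nonseparable V A"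
    and "ear_decomposition V A VV AA PP k"
    and "i < k"
    and "path_len (PP i) \<ge> 2"
    and "kernel (VV i) (AA i) N"
    and "\<not> has_kernel (VV (Suc i)) (AA (Suc i))"
  shows "(hd (PP i) \<in> N \<and> last (PP i) \<in> N \<and> odd (path_len (PP i))) \<or>
         (hd (PP i) \<in> N \<and> last (PP i) \<notin> N \<and> even (path_len (PP i)))"
proof -
  have ear: "ear (VV i) A (PP i)"
    and step: "VV (Suc i) = VV i \<union> set (PP i)" "AA (Suc i) = AA i \<union> path_arcs (PP i)"
    and sub: "AA i \<subseteq> VV i \<times> VV i"
    using assms(4,5) unfolding ear_decomposition_def subdigraph_def by auto
  have "hd (PP i) \<in> N \<and> (last (PP i) \<in> N \<longleftrightarrow> odd (path_len (PP i)))"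
    using kernel_ear_kernel[OF assms(7) sub ear] assms(8) step
    unfolding has_kernel_def by auto
  then show ?thesis by auto
qed

end
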